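(* For any connected graph $G$ of order $n\ge 2$ with maximum degree $\Delta$, $$\max\Big\{\gamma(G),\frac{2}{\Delta}\alpha(G)\Big\}+\beta(G)\le\gamma_{oidR}(G)\le 3\beta(G).$$ Moreover, both bounds are sharp: there exist connected graphs attaining equality in the lower bound and connected graphs attaining equality in the upper bound.
   Context: $\gamma(G)$ is the domination number, $\alpha(G)$ the independence number and $\beta(G)$ the vertex cover number of $G$. A DRD function of $G$ is $f:V(G)\to\{0,1,2,3\}$ such that every vertex with value $0$ has a neighbor with value $3$ or two neighbors with value $2$, and every vertex with value $1$ has a neighbor with value at least $2$; it is an OIDRD function if the set of vertices with value $0$ is independent, and $\gamma_{oidR}(G)$ is the minimum weight $\sum_v f(v)$ of an OIDRD function. *)

theory Defs
  imports Complex_Main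
begin

definition graph :: "'a set \<Rightarrow> ('a \<Rightarrow> 'a \<Rightarrow> bool) \<Rightarrow> bool" where
  "graph V E \<longleftrightarrow> finite V \<and> (\<forall>u v. E u v \<longrightarrow> u \<in> V \<and> v \<in> V \<and> u \<noteq> v \<and> E v u)"

definition connected_graph :: "'a set \<Rightarrow> ('a \<Rightarrow> 'a \<Rightarrow> bool) \<Rightarrow> bool" where
  "connected_graph V E \<longleftrightarrow> V \<noteq> {} \<and> (\<forall>u\<in>V. \<forall>v\<in>V. E\<^sup>*\<^sup>* u v)"

definition degree :: "'a set \<Rightarrow> ('a \<Rightarrow> 'a \<Rightarrow> bool) \<Rightarrow> 'a \<Rightarrow> nat" where
  "degree V E v = card {u\<in>V. E v u}"

definition max_degree :: "'a set \<Rightarrow> ('a \<Rightarrow> 'a \<Rightarrow> bool) \<Rightarrow> nat" where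
  "max_degree V E = Max (degree V E ` V)"

definition dominating_set :: "'a set \<Rightarrow> ('a \<Rightarrow> 'a \<Rightarrow> bool) \<Rightarrow> 'a set \<Rightarrow> bool" where
  "dominating_set V E S \<longleftrightarrow> S \<subseteq> V \<and> (\<forall>v\<in>V - S. \<exists>u\<in>S. E v u)"

definition domination_number :: "'a set \<Rightarrow> ('a \<Rightarrow> 'a \<Rightarrow> bool) \<Rightarrow> nat" where
  "domination_number V E = Min (card ` {S. dominating_set V E S})"

definition independent_set :: "'a set \<Rightarrow> ('a \<Rightarrow> 'a \<Rightarrow> bool) \<Rightarrow> 'a set \<Rightarrow> bool" where
  "independent_set V E S \<longleftrightarrow> S \<subseteq> V \<and> (\<forall>u\<in>S. \<forall>v\<in>S. \<not> E u v)"

definition independence_number :: "'a set \<Rightarrow> ('a \<Rightarrow> 'a \<Rightarrow> bool) \<Rightarrow> nat" where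
  "independence_number V E = Max (card ` {S. independent_set V E S})"

definition vertex_cover :: "'a set \<Rightarrow> ('a \<Rightarrow> 'a \<Rightarrow> bool) \<Rightarrow> 'a set \<Rightarrow> bool" where
  "vertex_cover V E S \<longleftrightarrow> S \<subseteq> V \<and> (\<forall>u v. E u v \<longrightarrow> u \<in> S \<or> v \<in> S)"

definition vertex_cover_number :: "'a set \<Rightarrow> ('a \<Rightarrow> 'a \<Rightarrow> bool) \<Rightarrow> nat" where
  "vertex_cover_number V E = Min (card ` {S. vertex_cover V E S})"

text \<open>Double Roman dominating function; only the values on V matter.\<close>
definition DRD_function :: "'a set \<Rightarrow> ('a \<Rightarrow> 'a \<Rightarrow> bool) \<Rightarrow> ('a \<Rightarrow> nat) \<Rightarrow> bool" where
  "DRD_function V E f \<longleftrightarrow>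
     (\<forall>v\<in>V. f v \<le> 3) \<and>
     (\<forall>v\<in>V. f v = 0 \<longrightarrow>
        (\<exists>u. E v u \<and> f u = 3) \<or> (\<exists>u w. u \<noteq> w \<and> E v u \<and> E v w \<and> f u = 2 \<and> f w = 2)) \<and>
     (\<forall>v\<in>V. f v = 1 \<longrightarrow> (\<exists>u. E v u \<and> f u \<ge> 2))"

definition OIDRD_function :: "'a set \<Rightarrow> ('a \<Rightarrow> 'a \<Rightarrow> bool) \<Rightarrow> ('a \<Rightarrow> nat) \<Rightarrow> bool" where
  "OIDRD_function V E f \<longleftrightarrow> DRD_function V E f \<and> independent_set V E {v\<in>V. f v = 0}"

definition oidR_number :: "'a set \<Rightarrow> ('a \<Rightarrow> 'a \<Rightarrow> bool) \<Rightarrow> nat" where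
  "oidR_number V E = Min ((\<lambda>f. \<Sum>v\<in>V. f v) ` {f. OIDRD_function V E f})"

end

(* Let f be an OIDRD function of minimum weight w(f) and V_i = {v. f v = i}. Since V_0 is
   independent, V_1 \<union> V_2 \<union> V_3 is a vertex cover, and V_2 \<union> V_3 dominates; as
   w(f) \<ge> |V_1 \<union> V_2 \<union> V_3| + |V_2 \<union> V_3|, this gives \<gamma> + \<beta> \<le> w(f).
   Every vertex of V_0 sees at least 2 units of excess weight f u - 1 in its neighbourhood, and a
   vertex lies in at most \<Delta> neighbourhoods, so 2|V_0| \<le> \<Delta> (w(f) - |V - V_0|). With
   |V_0| \<le> \<alpha> and \<beta> \<le> n - \<alpha> this yields 2\<alpha>/\<Delta> + \<beta> \<le> w(f) for \<Delta> \<ge> 2; the only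
   connected graph with \<Delta> = 1 is K_2, on which every DRD function has weight at least 3.
   Conversely, the value 3 on a minimum vertex cover is an OIDRD function.
   K_2 attains both bounds. *)

theory Submission
  imports Defs
begin

lemma finite_card_image_of_subsets:
  assumes "finite V" "\<And>S. P S \<Longrightarrow> S \<subseteq> V"
  shows "finite (card ` {S. P S})"
  using assms by (metis Collect_mono Pow_def finite_Pow_iff finite_imageI finite_subset)

lemma domination_number_le:
  assumes "finite V" "dominating_set V E S"
  shows "domination_number V E \<le> card S"
  unfolding domination_number_def
  by (rule Min_le, rule finite_card_image_of_subsets[OF assms(1)])
     (use assms(2) in \<open>auto simp: dominating_set_def\<close>)

lemma vertex_cover_number_le:
  assumes "finite V" "vertex_cover V E S"
  shows "vertex_cover_number V E \<le> card S"
  unfolding vertex_cover_number_def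
  by (rule Min_le, rule finite_card_image_of_subsets[OF assms(1)])
     (use assms(2) in \<open>auto simp: vertex_cover_def\<close>)

lemma vertex_cover_number_attained:
  assumes "graph V E"
  obtains S where "vertex_cover V E S" "card S = vertex_cover_number V E"
proof -
  have "finite (card ` {S. vertex_cover V E S})"
    using assms by (intro finite_card_image_of_subsets) (auto simp: graph_def vertex_cover_def)
  moreover have "vertex_cover V E V"
    using assms by (auto simp: vertex_cover_def graph_def)
  ultimately have "vertex_cover_number V E \<in> card ` {S. vertex_cover V E S}"
    unfolding vertex_cover_number_def by (intro Min_in) auto
  then show ?thesis using that by auto
qed

lemma independence_number_ge:
  assumes "finite V" "independent_set V E S"
  shows "card S \<le> independence_number V E"
  unfolding independence_number_def
  by (rule Max_ge, rule finite_card_image_of_subsets[OF assms(1)])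
     (use assms(2) in \<open>auto simp: independent_set_def\<close>)

lemma independence_number_attained:
  assumes "finite V"
  obtains S where "independent_set V E S" "card S = independence_number V E"
proof -
  have "finite (card ` {S. independent_set V E S})"
    using assms by (intro finite_card_image_of_subsets) (auto simp: independent_set_def)
  moreover have "independent_set V E {}"
    by (auto simp: independent_set_def)
  ultimately have "independence_number V E \<in> card ` {S. independent_set V E S}"
    unfolding independence_number_def by (intro Max_in) auto
  then show ?thesis using that by auto
qed

lemma finite_OIDRD_weights:
  assumes "finite V"
  shows "finite ((\<lambda>f. \<Sum>v\<in>V. f v) ` {f. OIDRD_function V E f})"
proof (rule finite_subset)
  show "(\<lambda>f. \<Sum>v\<in>V. f v) ` {f. OIDRD_function V E f} \<subseteq> {..3 * card V}"
  proof clarify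
    fix f assume "OIDRD_function V E f"
    then have "(\<Sum>v\<in>V. f v) \<le> (\<Sum>v\<in>V. 3)"
      by (intro sum_mono) (auto simp: OIDRD_function_def DRD_function_def)
    then show "(\<Sum>v\<in>V. f v) \<le> 3 * card V" by simp
  qed
qed simp

lemma oidR_number_le:
  assumes "finite V" "OIDRD_function V E f"
  shows "oidR_number V E \<le> (\<Sum>v\<in>V. f v)"
  unfolding oidR_number_def
  by (rule Min_le[OF finite_OIDRD_weights[OF assms(1)]]) (use assms(2) in blast)

lemma oidR_number_attained:
  assumes "finite V"
  obtains f where "OIDRD_function V E f" "(\<Sum>v\<in>V. f v) = oidR_number V E"
proof -
  have "OIDRD_function V E (\<lambda>_. 2)"
    by (auto simp: OIDRD_function_def DRD_function_def independent_set_def)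
  then have "oidR_number V E \<in> (\<lambda>f. \<Sum>v\<in>V. f v) ` {f. OIDRD_function V E f}"
    unfolding oidR_number_def by (intro Min_in finite_OIDRD_weights[OF assms]) auto
  then show ?thesis using that by auto
qed

lemma vertex_cover_number_plus_independence_number_le:
  assumes "graph V E"
  shows "vertex_cover_number V E + independence_number V E \<le> card V"
proof -
  have fin: "finite V" using assms by (simp add: graph_def)
  obtain I where I: "independent_set V E I" "card I = independence_number V E"
    using independence_number_attained[OF fin] .
  have IV: "I \<subseteq> V" using I(1) by (simp add: independent_set_def)
  have "vertex_cover V E (V - I)"
    using I(1) assms unfolding independent_set_def vertex_cover_def graph_def by blast
  then have "vertex_cover_number V E \<le> card (V - I)"
    by (rule vertex_cover_number_le[OF fin])
  also have "\<dots> = card V - card I"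
    using card_Diff_subset[OF finite_subset[OF IV fin] IV] .
  moreover have "card I \<le> card V" using card_mono[OF fin IV] .
  ultimately show ?thesis using I(2) by simp
qed

lemma vertex_cover_number_pos:
  assumes "graph V E" "E a b"
  shows "vertex_cover_number V E \<ge> 1"
proof -
  obtain S where S: "vertex_cover V E S" "card S = vertex_cover_number V E"
    using vertex_cover_number_attained[OF assms(1)] .
  have "finite S" using S(1) assms(1) by (auto simp: vertex_cover_def graph_def intro: finite_subset)
  moreover have "S \<noteq> {}" using S(1) assms(2) by (auto simp: vertex_cover_def)
  ultimately show ?thesis using S(2) by (metis One_nat_def Suc_leI card_gt_0_iff)
qed

lemma degree_le_max_degree:
  assumes "finite V" "v \<in> V"
  shows "degree V E v \<le> max_degree V E"
  unfolding max_degree_def using assms by simp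

lemma connected_graph_has_neighbour:
  assumes "connected_graph V E" "finite V" "card V \<ge> 2" "v \<in> V"
  obtains u where "E v u"
proof -
  obtain w where "w \<in> V" "w \<noteq> v"
    using assms(3,4) card_le_Suc0_iff_eq[OF assms(2)] by (metis not_less_eq_eq numeral_2_eq_2)
  moreover have "E\<^sup>*\<^sup>* v w" using assms(1,4) \<open>w \<in> V\<close> by (simp add: connected_graph_def)
  ultimately show ?thesis using that by (metis converse_rtranclpE)
qed

lemma max_degree_one_unique_neighbour:
  assumes "graph V E" "max_degree V E = 1" "E v u" "E v w"
  shows "u = w"
proof (rule ccontr)
  assume "u \<noteq> w"
  have fin: "finite V" and "v \<in> V" using assms(1,3) by (auto simp: graph_def)
  have "{u, w} \<subseteq> {x\<in>V. E v x}" using assms(1,3,4) by (auto simp: graph_def)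
  then have "card {u, w} \<le> degree V E v"
    unfolding degree_def using fin by (intro card_mono) simp_all
  also have "\<dots> \<le> 1" using degree_le_max_degree[OF fin \<open>v \<in> V\<close>, of E] assms(2) by simp
  finally show False using \<open>u \<noteq> w\<close> by simp
qed

lemma connected_graph_max_degree_one:
  assumes "graph V E" "connected_graph V E" "card V \<ge> 2" "max_degree V E = 1"
  obtains a b where "V = {a, b}" "E a b"
proof -
  have fin: "finite V" using assms(1) by (simp add: graph_def)
  obtain a where a: "a \<in> V" using assms(3) by fastforce
  obtain b where ab: "E a b" using connected_graph_has_neighbour[OF assms(2) fin assms(3) a] .
  have ba: "E b a" and b: "b \<in> V" using assms(1) ab by (auto simp: graph_def)
  have "x \<in> {a, b}" if "E\<^sup>*\<^sup>* a x" for x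
    using that
  proof (induction rule: rtranclp_induct)
    case (step x y)
    then show ?case
      using max_degree_one_unique_neighbour[OF assms(1,4)] ab ba by blast
  qed simp
  then have "V \<subseteq> {a, b}" using assms(2) a by (auto simp: connected_graph_def)
  then have "V = {a, b}" using a b by blast
  then show ?thesis using that ab by blast
qed

lemma sum_eq_sum_pred_plus_card_pos:
  fixes f :: "'a \<Rightarrow> nat"
  assumes "finite V"
  shows "(\<Sum>v\<in>V. f v) = (\<Sum>v\<in>V. f v - 1) + card {v\<in>V. 1 \<le> f v}"
proof -
  have "(\<Sum>v\<in>V. f v) = (\<Sum>v\<in>V. (f v - 1) + of_bool (1 \<le> f v))"
    by (rule sum.cong) auto
  then show ?thesis using assms by (simp add: sum.distrib Collect_conj_eq Int_commute)
qed

lemma card_zeros_plus_card_pos: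
  fixes f :: "'a \<Rightarrow> nat"
  assumes "finite V"
  shows "card V = card {v\<in>V. f v = 0} + card {v\<in>V. 1 \<le> f v}"
proof -
  have "V = {v\<in>V. f v = 0} \<union> {v\<in>V. 1 \<le> f v}" by auto
  moreover have "{v\<in>V. f v = 0} \<inter> {v\<in>V. 1 \<le> f v} = {}" by auto
  ultimately show ?thesis using assms by (metis card_Un_disjoint finite_Un)
qed

lemma card_pos_plus_card_ge_two_le_sum:
  fixes f :: "'a \<Rightarrow> nat"
  assumes "finite V"
  shows "card {v\<in>V. 1 \<le> f v} + card {v\<in>V. 2 \<le> f v} \<le> (\<Sum>v\<in>V. f v)"
proof -
  have "card {v\<in>V. 1 \<le> f v} + card {v\<in>V. 2 \<le> f v}
      = (\<Sum>v\<in>V. of_bool (1 \<le> f v) + of_bool (2 \<le> f v))"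
    using assms by (simp add: sum.distrib Collect_conj_eq Int_commute)
  also have "\<dots> \<le> (\<Sum>v\<in>V. f v)" by (rule sum_mono) auto
  finally show ?thesis .
qed

lemma OIDRD_positive_vertex_cover:
  assumes "graph V E" "OIDRD_function V E f"
  shows "vertex_cover V E {v\<in>V. 1 \<le> f v}"
  unfolding vertex_cover_def
proof (intro conjI allI impI)
  fix u v assume "E u v"
  then have "u \<in> V" "v \<in> V" "\<not> (f u = 0 \<and> f v = 0)"
    using assms unfolding graph_def OIDRD_function_def independent_set_def by blast+
  then show "u \<in> {v\<in>V. 1 \<le> f v} \<or> v \<in> {v\<in>V. 1 \<le> f v}" by auto
qed auto

lemma DRD_dominating_set:
  assumes "graph V E" "DRD_function V E f"
  shows "dominating_set V E {v\<in>V. 2 \<le> f v}"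
  unfolding dominating_set_def
proof (intro conjI ballI)
  fix v assume v: "v \<in> V - {v\<in>V. 2 \<le> f v}"
  then have "f v = 0 \<or> f v = 1" by auto
  moreover have "f v = 0 \<Longrightarrow> \<exists>u. E v u \<and> 2 \<le> f u"
    using assms(2) v unfolding DRD_function_def by force
  moreover have "f v = 1 \<Longrightarrow> \<exists>u. E v u \<and> 2 \<le> f u"
    using assms(2) v unfolding DRD_function_def by blast
  ultimately obtain u where "E v u" "2 \<le> f u" by blast
  then show "\<exists>u\<in>{v\<in>V. 2 \<le> f v}. E v u" using assms(1) by (auto simp: graph_def)
qed auto

lemma DRD_zero_neighbourhood_excess:
  assumes "graph V E" "DRD_function V E f" "v \<in> V" "f v = 0"
  shows "2 \<le> (\<Sum>u\<in>{u\<in>V. E v u}. f u - 1)"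
proof -
  have fin: "finite {u\<in>V. E v u}" using assms(1) by (simp add: graph_def)
  have nbr: "u \<in> V" if "E v u" for u using assms(1) that by (auto simp: graph_def)
  consider u where "E v u" "f u = 3" | u w where "u \<noteq> w" "E v u" "E v w" "f u = 2" "f w = 2"
    using assms(2-4) unfolding DRD_function_def by blast
  then show ?thesis
  proof cases
    case (1 u)
    have "(\<Sum>x\<in>{u}. f x - 1) \<le> (\<Sum>x\<in>{u\<in>V. E v u}. f x - 1)"
      using 1 nbr by (intro sum_mono2[OF fin]) auto
    then show ?thesis using 1 by simp
  next
    case (2 u w)
    have "(\<Sum>x\<in>{u, w}. f x - 1) \<le> (\<Sum>x\<in>{u\<in>V. E v u}. f x - 1)"
      using 2 nbr by (intro sum_mono2[OF fin]) auto
    then show ?thesis using 2 by simp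
  qed
qed

lemma DRD_leaf_weight:
  assumes "DRD_function V E f" "v \<in> V" "\<And>w. E v w \<Longrightarrow> w = u" "f v \<le> 1"
  shows "3 \<le> f v + f u"
proof -
  have "f v = 0 \<Longrightarrow> f u = 3"
    using assms(1-3) unfolding DRD_function_def by blast
  moreover have "f v = 1 \<Longrightarrow> 2 \<le> f u"
    using assms(1-3) unfolding DRD_function_def by blast
  ultimately show ?thesis using assms(4) by linarith
qed

lemma sum_over_neighbourhoods_le:
  fixes g :: "'a \<Rightarrow> nat"
  assumes "graph V E" "A \<subseteq> V"
  shows "(\<Sum>v\<in>A. \<Sum>u\<in>{u\<in>V. E v u}. g u) \<le> max_degree V E * (\<Sum>u\<in>V. g u)"
proof -
  have fin: "finite V" using assms(1) by (simp add: graph_def)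
  have finA: "finite A" using finite_subset[OF assms(2) fin] .
  have "(\<Sum>v\<in>A. \<Sum>u\<in>{u\<in>V. E v u}. g u) = (\<Sum>v\<in>A. \<Sum>u\<in>V. if E v u then g u else 0)"
    using fin by (intro sum.cong refl sum.inter_filter)
  also have "\<dots> = (\<Sum>u\<in>V. \<Sum>v\<in>A. if E v u then g u else 0)"
    by (rule sum.swap)
  also have "\<dots> = (\<Sum>u\<in>V. g u * card {v\<in>A. E v u})"
    using finA by (intro sum.cong refl) (simp add: sum.inter_filter[symmetric])
  also have "\<dots> \<le> (\<Sum>u\<in>V. g u * max_degree V E)"
  proof (intro sum_mono mult_left_mono)
    fix u assume u: "u \<in> V"
    have "{v\<in>A. E v u} \<subseteq> {v\<in>V. E u v}" using assms by (auto simp: graph_def)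
    then have "card {v\<in>A. E v u} \<le> degree V E u"
      unfolding degree_def using fin by (intro card_mono) simp_all
    then show "card {v\<in>A. E v u} \<le> max_degree V E"
      using degree_le_max_degree[OF fin u] by (rule order_trans)
  qed simp
  finally show ?thesis by (simp add: sum_distrib_left mult.commute)
qed

lemma DRD_zeros_bound:
  assumes "graph V E" "DRD_function V E f"
  shows "2 * card {v\<in>V. f v = 0} \<le> max_degree V E * (\<Sum>u\<in>V. f u - 1)"
proof -
  have "2 * card {v\<in>V. f v = 0} = (\<Sum>v\<in>{v\<in>V. f v = 0}. 2)" by simp
  also have "\<dots> \<le> (\<Sum>v\<in>{v\<in>V. f v = 0}. \<Sum>u\<in>{u\<in>V. E v u}. f u - 1)"
    using DRD_zero_neighbourhood_excess[OF assms] by (intro sum_mono) simp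
  also have "\<dots> \<le> max_degree V E * (\<Sum>u\<in>V. f u - 1)"
    using sum_over_neighbourhoods_le[OF assms(1)] by simp
  finally show ?thesis .
qed

lemma oidR_number_ge_domination_plus_cover:
  assumes "graph V E"
  shows "domination_number V E + vertex_cover_number V E \<le> oidR_number V E"
proof -
  have fin: "finite V" using assms by (simp add: graph_def)
  obtain f where f: "OIDRD_function V E f" and w: "(\<Sum>v\<in>V. f v) = oidR_number V E"
    using oidR_number_attained[OF fin] .
  have "domination_number V E \<le> card {v\<in>V. 2 \<le> f v}"
    using f by (intro domination_number_le[OF fin] DRD_dominating_set[OF assms])
      (simp add: OIDRD_function_def)
  moreover have "vertex_cover_number V E \<le> card {v\<in>V. 1 \<le> f v}"
    by (intro vertex_cover_number_le[OF fin] OIDRD_positive_vertex_cover[OF assms f])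
  ultimately show ?thesis
    using card_pos_plus_card_ge_two_le_sum[OF fin, of f] w by linarith
qed

lemma oidR_number_ge_independence_plus_cover_of_max_degree_ge_2:
  assumes "graph V E" "max_degree V E \<ge> 2"
  shows "2 / real (max_degree V E) * real (independence_number V E)
           + real (vertex_cover_number V E) \<le> real (oidR_number V E)"
proof -
  have fin: "finite V" using assms(1) by (simp add: graph_def)
  obtain f where f: "OIDRD_function V E f" and w: "(\<Sum>v\<in>V. f v) = oidR_number V E"
    using oidR_number_attained[OF fin] .
  define \<Delta> \<alpha> z G where "\<Delta> = max_degree V E" and "\<alpha> = independence_number V E"
    and "z = card {v\<in>V. f v = 0}" and "G = (\<Sum>v\<in>V. f v - 1)"
  have "z \<le> \<alpha>"
    unfolding z_def \<alpha>_def using f by (intro independence_number_ge[OF fin]) (simp add: OIDRD_function_def)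
  have "2 * \<alpha> = 2 * z + 2 * (\<alpha> - z)" using \<open>z \<le> \<alpha>\<close> by simp
  also have "\<dots> \<le> \<Delta> * G + \<Delta> * (\<alpha> - z)"
    using DRD_zeros_bound[OF assms(1), of f] f assms(2)
    by (intro add_mono) (simp_all add: OIDRD_function_def \<Delta>_def z_def G_def)
  finally have "2 * real \<alpha> \<le> real \<Delta> * (real G + real \<alpha> - real z)"
    using \<open>z \<le> \<alpha>\<close> by (simp add: algebra_simps flip: of_nat_mult of_nat_add of_nat_le_iff of_nat_diff)
  then have "2 / real \<Delta> * real \<alpha> \<le> real G + real \<alpha> - real z"
    using assms(2) by (simp add: \<Delta>_def divide_le_eq mult.commute)
  moreover have "vertex_cover_number V E + \<alpha> \<le> z + card {v\<in>V. 1 \<le> f v}"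
    using vertex_cover_number_plus_independence_number_le[OF assms(1)]
      card_zeros_plus_card_pos[OF fin, of f] by (simp add: \<alpha>_def z_def)
  moreover have "oidR_number V E = G + card {v\<in>V. 1 \<le> f v}"
    using sum_eq_sum_pred_plus_card_pos[OF fin, of f] w by (simp add: G_def)
  ultimately show ?thesis unfolding \<Delta>_def \<alpha>_def by linarith
qed

lemma oidR_number_of_edge_ge_3:
  assumes "graph V E" "V = {a, b}" "E a b"
  shows "3 \<le> oidR_number V E"
proof -
  have E: "\<And>u v. E u v \<Longrightarrow> u \<in> V \<and> v \<in> V \<and> u \<noteq> v" and "E b a"
    using assms(1,3) unfolding graph_def by blast+
  then have "a \<noteq> b" using assms(3) by blast
  have nbrs: "\<And>w. E a w \<Longrightarrow> w = b" "\<And>w. E b w \<Longrightarrow> w = a"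
    using E assms(2) by blast+
  obtain f where f: "OIDRD_function V E f" and w: "(\<Sum>v\<in>V. f v) = oidR_number V E"
    using oidR_number_attained assms(1) unfolding graph_def by blast
  then have D: "DRD_function V E f" by (simp add: OIDRD_function_def)
  have "3 \<le> f a + f b"
  proof (cases "f a \<le> 1 \<or> f b \<le> 1")
    case True
    then show ?thesis
      using DRD_leaf_weight[OF D _ nbrs(1), of a] DRD_leaf_weight[OF D _ nbrs(2), of b] assms(2)
      by auto
  qed simp
  then show ?thesis using w assms(2) \<open>a \<noteq> b\<close> by simp
qed

lemma oidR_number_ge_independence_plus_cover:
  assumes "graph V E" "connected_graph V E" "card V \<ge> 2"
  shows "2 / real (max_degree V E) * real (independence_number V E)
           + real (vertex_cover_number V E) \<le> real (oidR_number V E)"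
proof -
  consider "max_degree V E = 0" | "max_degree V E = 1" | "max_degree V E \<ge> 2" by linarith
  then show ?thesis
  proof cases
    case 1
    then show ?thesis using oidR_number_ge_domination_plus_cover[OF assms(1)] by simp
  next
    case 2
    then obtain a b where ab: "V = {a, b}" "E a b"
      using connected_graph_max_degree_one[OF assms] by blast
    have "vertex_cover_number V E + independence_number V E \<le> 2"
      using vertex_cover_number_plus_independence_number_le[OF assms(1)] assms(1,3) ab
      by (simp add: card_insert_if split: if_splits)
    then have "2 * independence_number V E + vertex_cover_number V E \<le> oidR_number V E"
      using vertex_cover_number_pos[OF assms(1) ab(2)] oidR_number_of_edge_ge_3[OF assms(1) ab]
      by linarith
    then show ?thesis using 2 by (simp flip: of_nat_le_iff)
  next
    case 3
    then show ?thesis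
      using oidR_number_ge_independence_plus_cover_of_max_degree_ge_2[OF assms(1)] by blast
  qed
qed

lemma oidR_number_le_3_vertex_cover_number:
  assumes "graph V E" "connected_graph V E" "card V \<ge> 2"
  shows "oidR_number V E \<le> 3 * vertex_cover_number V E"
proof -
  have fin: "finite V" using assms(1) by (simp add: graph_def)
  obtain S where S: "vertex_cover V E S" "card S = vertex_cover_number V E"
    using vertex_cover_number_attained[OF assms(1)] .
  have SV: "S \<subseteq> V" using S(1) by (simp add: vertex_cover_def)
  define f where "f v = (if v \<in> S then 3 else 0 :: nat)" for v
  have "OIDRD_function V E f"
    unfolding OIDRD_function_def DRD_function_def independent_set_def
  proof (intro conjI ballI impI)
    fix v assume v: "v \<in> V" "f v = 0"
    obtain u where u: "E v u" using connected_graph_has_neighbour[OF assms(2) fin assms(3) v(1)] .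
    then have "u \<in> S" using S(1) v(2) by (auto simp: vertex_cover_def f_def split: if_splits)
    then show "(\<exists>u. E v u \<and> f u = 3) \<or> (\<exists>u w. u \<noteq> w \<and> E v u \<and> E v w \<and> f u = 2 \<and> f w = 2)"
      using u by (auto simp: f_def)
  next
    fix u v assume "u \<in> {v \<in> V. f v = 0}" "v \<in> {v \<in> V. f v = 0}"
    then show "\<not> E u v" using S(1) by (auto simp: f_def vertex_cover_def split: if_splits)
  qed (auto simp: f_def split: if_splits)
  then have "oidR_number V E \<le> (\<Sum>v\<in>V. f v)" by (rule oidR_number_le[OF fin])
  also have "\<dots> = 3 * card S"
    using fin SV by (simp add: f_def sum.If_cases Int_absorb1 Int_absorb2)
  finally show ?thesis using S(2) by simp
qed

lemma K2_connected_graph: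
  assumes "a \<noteq> b"
  shows "graph {a, b} (\<lambda>u v. {u, v} = {a, b})" "connected_graph {a, b} (\<lambda>u v. {u, v} = {a, b})"
    "card {a, b} = 2"
proof -
  show "graph {a, b} (\<lambda>u v. {u, v} = {a, b})"
    using assms by (auto simp: graph_def doubleton_eq_iff)
  have "(\<lambda>u v. {u, v} = {a, b})\<^sup>*\<^sup>* u v" if "u \<in> {a, b}" "v \<in> {a, b}" for u v
    using that assms by (cases "u = v") (auto intro: r_into_rtranclp)
  then show "connected_graph {a, b} (\<lambda>u v. {u, v} = {a, b})"
    by (simp add: connected_graph_def)
  show "card {a, b} = 2" using assms by simp
qed

lemma K2_invariants:
  assumes "a \<noteq> b"
  defines "E \<equiv> \<lambda>u v. {u, v} = {a, b}"
  shows "vertex_cover_number {a, b} E = 1" "independence_number {a, b} E = 1"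
    "max_degree {a, b} E = 1" "domination_number {a, b} E \<le> 1" "oidR_number {a, b} E = 3"
proof -
  note K2 = K2_connected_graph[OF assms(1), folded E_def]
  have fin: "finite {a, b}" by simp
  have "E a b" by (simp add: E_def)
  have "vertex_cover_number {a, b} E \<le> card {a}"
    by (rule vertex_cover_number_le[OF fin]) (auto simp: vertex_cover_def E_def doubleton_eq_iff)
  then show \<beta>: "vertex_cover_number {a, b} E = 1"
    using vertex_cover_number_pos[OF K2(1) \<open>E a b\<close>] by simp
  have "card {a} \<le> independence_number {a, b} E"
    using assms(1) by (intro independence_number_ge[OF fin])
      (auto simp: independent_set_def E_def doubleton_eq_iff)
  then show "independence_number {a, b} E = 1"
    using vertex_cover_number_plus_independence_number_le[OF K2(1)] K2(3) \<beta> by simp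
  have "{u \<in> {a, b}. E a u} = {b}" "{u \<in> {a, b}. E b u} = {a}"
    using assms(1) by (auto simp: E_def doubleton_eq_iff)
  then have "degree {a, b} E ` {a, b} = {1}" by (simp add: degree_def)
  then show "max_degree {a, b} E = 1" by (simp add: max_degree_def)
  show "domination_number {a, b} E \<le> 1"
    using domination_number_le[OF fin, of E "{a}"]
    by (auto simp: dominating_set_def E_def doubleton_eq_iff)
  show "oidR_number {a, b} E = 3"
    using oidR_number_le_3_vertex_cover_number[OF K2(1,2)] K2(3) \<beta>
      oidR_number_of_edge_ge_3[OF K2(1) refl \<open>E a b\<close>]
    by simp
qed

theorem theorem4:
  "(\<forall>(V :: 'a set) E. graph V E \<and> connected_graph V E \<and> card V \<ge> 2 \<longrightarrow>
      max (real (domination_number V E))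
          (2 / real (max_degree V E) * real (independence_number V E))
        + real (vertex_cover_number V E) \<le> real (oidR_number V E)
      \<and> oidR_number V E \<le> 3 * vertex_cover_number V E)
   \<and> (\<exists>(V :: nat set) E. graph V E \<and> connected_graph V E \<and> card V \<ge> 2 \<and>
      max (real (domination_number V E))
          (2 / real (max_degree V E) * real (independence_number V E))
        + real (vertex_cover_number V E) = real (oidR_number V E))
   \<and> (\<exists>(V :: nat set) E. graph V E \<and> connected_graph V E \<and> card V \<ge> 2 \<and>
      oidR_number V E = 3 * vertex_cover_number V E)"
proof (intro conjI allI impI)
  fix V :: "'a set" and E assume G: "graph V E \<and> connected_graph V E \<and> card V \<ge> 2"
  then have "domination_number V E + vertex_cover_number V E \<le> oidR_number V E"
    using oidR_number_ge_domination_plus_cover by blast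
  then have "real (domination_number V E) + real (vertex_cover_number V E) \<le> real (oidR_number V E)"
    by (simp flip: of_nat_add)
  moreover have "2 / real (max_degree V E) * real (independence_number V E)
      + real (vertex_cover_number V E) \<le> real (oidR_number V E)"
    using G oidR_number_ge_independence_plus_cover by blast
  ultimately show "max (real (domination_number V E))
          (2 / real (max_degree V E) * real (independence_number V E))
        + real (vertex_cover_number V E) \<le> real (oidR_number V E)"
    by (simp add: max_add_distrib_left)
  show "oidR_number V E \<le> 3 * vertex_cover_number V E"
    using G oidR_number_le_3_vertex_cover_number by blast
next
  let ?E = "\<lambda>u v. {u, v} = {0 :: nat, 1}"
  have "(0 :: nat) \<noteq> 1" by simp
  note K2 = K2_connected_graph[OF this] K2_invariants[OF this]
  show "\<exists>(V :: nat set) E. graph V E \<and> connected_graph V E \<and> card V \<ge> 2 \<and>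
      max (real (domination_number V E))
          (2 / real (max_degree V E) * real (independence_number V E))
        + real (vertex_cover_number V E) = real (oidR_number V E)"
    using K2 by (intro exI[of _ "{0, 1}"] exI[of _ ?E]) (simp add: max_def)
  show "\<exists>(V :: nat set) E. graph V E \<and> connected_graph V E \<and> card V \<ge> 2 \<and>
      oidR_number V E = 3 * vertex_cover_number V E"
    using K2 by (intro exI[of _ "{0, 1}"] exI[of _ ?E]) simp
qed

end
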